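(* Let $g\in\mathcal D$, let $Y_1,Y_2$ be i.i.d. with density $g$, let $k\in\mathbb N$ and define $h:[0,1)^2\to\mathbb R$ by $$h(y_1,y_2):=\sum_{j\in\mathbb Z:|j|\in[k]}(e_j(-y_1)-g_j)(e_j(y_2)-\overline{g_j}).$$ Then $h$ is real-valued, bounded, symmetric and satisfies $\mathbb E[h(Y_1,y_2)]=0$ for all $y_2\in[0,1)$. Moreover, with $\mathsf A:=8k$, $\mathsf B:=3\|g_\bullet\|_{\ell^2}(2k)^{3/4}$, $\mathsf C:=2\|g_\bullet\|_{\ell^2}(2k)^{1/2}$ and $\mathsf D:=\mathsf C$, one has $\sup_{y_1,y_2}|h(y_1,y_2)|\le\mathsf A$, $\sup_{y_2}\mathbb E h^2(Y_1,y_2)\le\mathsf B^2$, $\mathbb E h^2(Y_1,Y_2)\le\mathsf C^2$ and $\sup\{\mathbb E[h(Y_1,Y_2)\zeta(Y_1)\xi(Y_2)]:\mathbb E\zeta^2(Y_1)\le1,\mathbb E\xi^2(Y_2)\le1\}\le\mathsf D$. If in addition $L^2(g)=L^2_{\mathbb R}$, then the last inequality also holds with $\mathsf D:=4\|g_\bullet\|_{\ell^1}$.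
   Context: $L^2:=L^2([0,1))$ complex-valued square-integrable functions with $\langle h_1,h_2\rangle=\int_0^1h_1\overline{h_2}$. $e_j(x):=\exp(-\mathrm i2\pi jx)$, $h_j:=\langle h,e_j\rangle$ for $j\in\mathbb Z$; $\|h_\bullet\|_{\ell^p}:=(\sum_{j\in\mathbb Z}|h_j|^p)^{1/p}$. $\mathcal D$ is the set of real-valued probability densities on $[0,1)$ in $L^2$. $[k]:=\{1,\dots,k\}$. For a density $g$, $L^2(g)$ is the set of real-valued Borel functions $u$ on $[0,1)$ with $\int_0^1u^2g<\infty$, and $L^2_{\mathbb R}:=L^2(\mathbb 1_{[0,1)})$. The suprema over $\zeta,\xi$ range over real Borel functions. *)

theory Defs
  imports "HOL-Analysis.Analysis"
begin

definition ej :: "int \<Rightarrow> real \<Rightarrow> complex" where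
  "ej j x = exp (- \<i> * complex_of_real (2 * pi * real_of_int j * x))"

definition fcoef :: "(real \<Rightarrow> real) \<Rightarrow> int \<Rightarrow> complex" where
  "fcoef g j = (LINT x:{0..<1}|lborel. complex_of_real (g x) * cnj (ej j x))"

definition dens_D :: "(real \<Rightarrow> real) \<Rightarrow> bool" where
  "dens_D g \<longleftrightarrow> g \<in> borel_measurable borel \<and> (\<forall>x\<in>{0..<1}. 0 \<le> g x)
     \<and> set_integrable lborel {0..<1} g \<and> (LINT x:{0..<1}|lborel. g x) = 1
     \<and> set_integrable lborel {0..<1} (\<lambda>x. (g x)\<^sup>2)"

definition L2w :: "(real \<Rightarrow> real) \<Rightarrow> (real \<Rightarrow> real) set" where
  "L2w g = {u. u \<in> borel_measurable borel \<and>
      (\<integral>\<^sup>+ x. ennreal ((u x)\<^sup>2 * g x) * indicator {0..<1} x \<partial>lborel) < \<infinity>}"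

definition hker :: "(real \<Rightarrow> real) \<Rightarrow> nat \<Rightarrow> real \<Rightarrow> real \<Rightarrow> complex" where
  "hker g k y1 y2 = (\<Sum>j\<in>{j::int. 1 \<le> \<bar>j\<bar> \<and> \<bar>j\<bar> \<le> int k}.
      (ej j (- y1) - fcoef g j) * (ej j y2 - cnj (fcoef g j)))"

definition l2norm_fc :: "(real \<Rightarrow> real) \<Rightarrow> real" where
  "l2norm_fc g = sqrt (\<Sum>\<^sub>\<infinity>j\<in>(UNIV::int set). (cmod (fcoef g j))\<^sup>2)"

definition l1norm_fc :: "(real \<Rightarrow> real) \<Rightarrow> real" where
  "l1norm_fc g = (\<Sum>\<^sub>\<infinity>j\<in>(UNIV::int set). cmod (fcoef g j))"

end

theory Submission
  imports Defs
begin

text \<open>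
  With the centred characters c_j(y) = e_j(-y) - g_j (\<open>cchar\<close>) the kernel is
  h(y1,y2) = sum_{j in J} c_j(y1) conj(c_j(y2)) with J = {1 <= |j| <= k}. Since c_{-j} = conj(c_j)
  it is real and symmetric, and E c_j(Y) = 0 makes it degenerate. Every second moment of h is
  governed by the Gram matrix G_jl = E c_j(Y) conj(c_l(Y)) = g_{j-l} - g_j conj(g_l): for instance
  E h^2(Y1,Y2) = ||G||_F^2, and ||G||_F^2 <= 8k ||g||_2^2 because |G_jl|^2 <= 2|g_{j-l}|^2 + 2|g_l|^2,
  while ||g||_2 >= |g_0| = 1 absorbs lower powers of ||g||_2.
  For a test function z with E z^2(Y) <= 1 the coefficients a_j = E z(Y) c_j(Y) satisfy the
  Bessel-type inequality (sum |a_j|^2)^2 <= sum_{j,l} |a_j| |a_l| |G_jl| for the non-orthogonal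
  family (c_j). Hence sum |a_j|^2 is at most ||G||_F and, by the Schur test, at most the largest
  row sum 2 ||g||_1 of |G|. Finally E h(Y1,Y2) z(Y1) x(Y2) = Re sum_j a_j(z) conj(a_j(x)).
\<close>

section \<open>Weighted integrals\<close>

lemma integrable_weighted_mult:
  fixes w f k :: "'a \<Rightarrow> real"
  assumes [measurable]: "w \<in> borel_measurable M" "f \<in> borel_measurable M" "k \<in> borel_measurable M"
    and w: "\<And>x. 0 \<le> w x"
    and f2: "integrable M (\<lambda>x. w x * (f x)\<^sup>2)" and k2: "integrable M (\<lambda>x. w x * (k x)\<^sup>2)"
  shows "integrable M (\<lambda>x. w x * f x * k x)"
proof (rule Bochner_Integration.integrable_bound)
  show "integrable M (\<lambda>x. w x * (f x)\<^sup>2 + w x * (k x)\<^sup>2)"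
    using f2 k2 by simp
  show "AE x in M. norm (w x * f x * k x) \<le> norm (w x * (f x)\<^sup>2 + w x * (k x)\<^sup>2)"
  proof (rule AE_I2)
    fix x
    have "2 * (\<bar>f x\<bar> * \<bar>k x\<bar>) \<le> (f x)\<^sup>2 + (k x)\<^sup>2"
      using sum_squares_bound[of "\<bar>f x\<bar>" "\<bar>k x\<bar>"] by (simp add: mult.assoc)
    then have "\<bar>f x * k x\<bar> \<le> (f x)\<^sup>2 + (k x)\<^sup>2"
      unfolding abs_mult using zero_le_mult_iff[of "\<bar>f x\<bar>" "\<bar>k x\<bar>"] by linarith
    from mult_left_mono[OF this w]
    show "norm (w x * f x * k x) \<le> norm (w x * (f x)\<^sup>2 + w x * (k x)\<^sup>2)"
      using w[of x] by (simp add: abs_mult distrib_left mult.assoc)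
  qed
qed simp

lemma Cauchy_Schwarz_weighted_integral:
  fixes w f k :: "'a \<Rightarrow> real"
  assumes [measurable]: "w \<in> borel_measurable M" "f \<in> borel_measurable M" "k \<in> borel_measurable M"
    and w: "\<And>x. 0 \<le> w x"
    and f2: "integrable M (\<lambda>x. w x * (f x)\<^sup>2)" and k2: "integrable M (\<lambda>x. w x * (k x)\<^sup>2)"
  shows "(\<integral>x. w x * f x * k x \<partial>M)\<^sup>2 \<le> (\<integral>x. w x * (f x)\<^sup>2 \<partial>M) * (\<integral>x. w x * (k x)\<^sup>2 \<partial>M)"
proof -
  define F where "F x = ennreal (sqrt (w x) * \<bar>f x\<bar>)" for x
  define K where "K x = ennreal (sqrt (w x) * \<bar>k x\<bar>)" for x
  have "F x * K x = ennreal \<bar>w x * f x * k x\<bar>" for x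
    unfolding F_def K_def using w[of x] by (simp add: ennreal_mult[symmetric] abs_mult)
  then have FK: "(\<integral>\<^sup>+x. F x * K x \<partial>M) = ennreal (\<integral>x. \<bar>w x * f x * k x\<bar> \<partial>M)"
    using integrable_weighted_mult[OF assms] by (simp add: nn_integral_eq_integral)
  have sq: "(\<integral>\<^sup>+x. (ennreal (sqrt (w x) * \<bar>u x\<bar>))\<^sup>2 \<partial>M) = ennreal (\<integral>x. w x * (u x)\<^sup>2 \<partial>M)"
    if "integrable M (\<lambda>x. w x * (u x)\<^sup>2)" for u
  proof -
    have "(ennreal (sqrt (w x) * \<bar>u x\<bar>))\<^sup>2 = ennreal (w x * (u x)\<^sup>2)" for x
      using w[of x] by (subst ennreal_power) (auto simp: power_mult_distrib)
    then show ?thesis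
      using that w by (simp add: nn_integral_eq_integral)
  qed
  have "ennreal ((\<integral>x. \<bar>w x * f x * k x\<bar> \<partial>M)\<^sup>2) = (\<integral>\<^sup>+x. F x * K x \<partial>M)\<^sup>2"
    unfolding FK by (rule ennreal_power[symmetric]) (rule integral_nonneg_AE, simp)
  also have "\<dots> \<le> (\<integral>\<^sup>+x. (F x)\<^sup>2 \<partial>M) * (\<integral>\<^sup>+x. (K x)\<^sup>2 \<partial>M)"
    by (rule Cauchy_Schwarz_nn_integral) (auto simp: F_def K_def)
  also have "\<dots> = ennreal ((\<integral>x. w x * (f x)\<^sup>2 \<partial>M) * (\<integral>x. w x * (k x)\<^sup>2 \<partial>M))"
    unfolding F_def K_def sq[OF f2] sq[OF k2]
    by (rule ennreal_mult'[symmetric]) (rule integral_nonneg_AE, simp add: w)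
  finally have "(\<integral>x. \<bar>w x * f x * k x\<bar> \<partial>M)\<^sup>2 \<le> (\<integral>x. w x * (f x)\<^sup>2 \<partial>M) * (\<integral>x. w x * (k x)\<^sup>2 \<partial>M)"
    by (rule ennreal_le_iff[THEN iffD1, rotated]) (intro mult_nonneg_nonneg integral_nonneg_AE, simp_all add: w)
  moreover have "(\<integral>x. w x * f x * k x \<partial>M)\<^sup>2 \<le> (\<integral>x. \<bar>w x * f x * k x\<bar> \<partial>M)\<^sup>2"
    using integral_abs_bound by (metis abs_ge_zero power2_abs power_mono)
  ultimately show ?thesis
    by linarith
qed

lemma integral_weighted_norm_sq_lincomb:
  fixes w :: "'a \<Rightarrow> real" and \<phi> :: "'b \<Rightarrow> 'a \<Rightarrow> complex" and c :: "'b \<Rightarrow> complex"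
  assumes iG: "\<And>j l. j \<in> F \<Longrightarrow> l \<in> F \<Longrightarrow>
      integrable M (\<lambda>x. complex_of_real (w x) * (\<phi> j x * cnj (\<phi> l x)))"
  defines "G \<equiv> \<lambda>j l. \<integral>x. complex_of_real (w x) * (\<phi> j x * cnj (\<phi> l x)) \<partial>M"
  shows "integrable M (\<lambda>x. w x * (cmod (\<Sum>j\<in>F. c j * \<phi> j x))\<^sup>2)"
    and "(\<integral>x. w x * (cmod (\<Sum>j\<in>F. c j * \<phi> j x))\<^sup>2 \<partial>M) = Re (\<Sum>j\<in>F. \<Sum>l\<in>F. c j * cnj (c l) * G j l)"
proof -
  define \<Phi> where "\<Phi> x = (\<Sum>j\<in>F. \<Sum>l\<in>F. (c j * cnj (c l)) * (complex_of_real (w x) * (\<phi> j x * cnj (\<phi> l x))))"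
    for x
  have "complex_of_real (w x) * ((\<Sum>j\<in>F. c j * \<phi> j x) * cnj (\<Sum>j\<in>F. c j * \<phi> j x)) = \<Phi> x" for x
    unfolding \<Phi>_def cnj_sum sum_product by (simp add: sum_distrib_left mult_ac)
  then have pt: "w x * (cmod (\<Sum>j\<in>F. c j * \<phi> j x))\<^sup>2 = Re (\<Phi> x)" for x
    by (metis Re_complex_of_real complex_norm_square mult.commute of_real_mult)
  have i\<Phi>: "integrable M \<Phi>"
    unfolding \<Phi>_def[abs_def] by (intro Bochner_Integration.integrable_sum integrable_mult_right iG)
  have "integral\<^sup>L M \<Phi> = (\<Sum>j\<in>F. \<Sum>l\<in>F. c j * cnj (c l) * G j l)"
    unfolding \<Phi>_def G_def using iG by (simp add: Bochner_Integration.integral_sum)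
  then show "integrable M (\<lambda>x. w x * (cmod (\<Sum>j\<in>F. c j * \<phi> j x))\<^sup>2)"
    and "(\<integral>x. w x * (cmod (\<Sum>j\<in>F. c j * \<phi> j x))\<^sup>2 \<partial>M) = Re (\<Sum>j\<in>F. \<Sum>l\<in>F. c j * cnj (c l) * G j l)"
    unfolding pt integral_Re[OF i\<Phi>] using integrable_Re[OF i\<Phi>] by simp_all
qed

lemma Bessel_Gram_inequality:
  fixes M :: "'a measure" and u w :: "'a \<Rightarrow> real" and \<phi> :: "'b \<Rightarrow> 'a \<Rightarrow> complex"
  assumes F: "finite F"
    and [measurable]: "w \<in> borel_measurable M" "u \<in> borel_measurable M" "\<And>j. \<phi> j \<in> borel_measurable M"
    and w: "\<And>x. 0 \<le> w x"
    and iu: "integrable M (\<lambda>x. w x * (u x)\<^sup>2)"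
    and ia: "\<And>j. j \<in> F \<Longrightarrow> integrable M (\<lambda>x. complex_of_real (w x * u x) * \<phi> j x)"
    and iG: "\<And>j l. j \<in> F \<Longrightarrow> l \<in> F \<Longrightarrow>
      integrable M (\<lambda>x. complex_of_real (w x) * (\<phi> j x * cnj (\<phi> l x)))"
  defines "a \<equiv> \<lambda>j. \<integral>x. complex_of_real (w x * u x) * \<phi> j x \<partial>M"
    and "G \<equiv> \<lambda>j l. \<integral>x. complex_of_real (w x) * (\<phi> j x * cnj (\<phi> l x)) \<partial>M"
  shows "(\<Sum>j\<in>F. (cmod (a j))\<^sup>2)\<^sup>2 \<le> (\<integral>x. w x * (u x)\<^sup>2 \<partial>M) *
            (\<Sum>j\<in>F. \<Sum>l\<in>F. cmod (a j) * cmod (a l) * cmod (G j l))"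
proof -
  define q where "q x = (\<Sum>j\<in>F. cnj (a j) * \<phi> j x)" for x
  have [measurable]: "q \<in> borel_measurable M"
    unfolding q_def[abs_def] by measurable
  have q_norm: "integrable M (\<lambda>x. w x * (cmod (q x))\<^sup>2)"
      "(\<integral>x. w x * (cmod (q x))\<^sup>2 \<partial>M) = Re (\<Sum>j\<in>F. \<Sum>l\<in>F. cnj (a j) * cnj (cnj (a l)) * G j l)"
    unfolding q_def G_def using integral_weighted_norm_sq_lincomb[OF iG, where c="\<lambda>j. cnj (a j)"] by simp_all
  have wuq: "complex_of_real (w x * u x) * q x
      = (\<Sum>j\<in>F. cnj (a j) * (complex_of_real (w x * u x) * \<phi> j x))" for x
    unfolding q_def sum_distrib_left by (simp add: mult_ac)
  have i1: "integrable M (\<lambda>x. complex_of_real (w x * u x) * q x)"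
    unfolding wuq by (intro Bochner_Integration.integrable_sum integrable_mult_right ia)
  have "(\<integral>x. complex_of_real (w x * u x) * q x \<partial>M) = (\<Sum>j\<in>F. cnj (a j) * a j)"
    unfolding wuq a_def using ia by (simp add: Bochner_Integration.integral_sum)
  then have S: "(\<Sum>j\<in>F. (cmod (a j))\<^sup>2) = (\<integral>x. w x * u x * Re (q x) \<partial>M)"
    using integral_Re[OF i1] by (simp add: cmod_power2 mult_ac flip: power2_eq_square)
  have Re_q: "w x * (Re (q x))\<^sup>2 \<le> w x * (cmod (q x))\<^sup>2" for x
    using w[of x] abs_Re_le_cmod[of "q x"]
    by (intro mult_left_mono) (auto simp flip: abs_le_square_iff)
  have iRq: "integrable M (\<lambda>x. w x * (Re (q x))\<^sup>2)"
    by (rule Bochner_Integration.integrable_bound[OF q_norm(1)]) (use w Re_q in auto)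
  have "(\<Sum>j\<in>F. (cmod (a j))\<^sup>2)\<^sup>2 \<le> (\<integral>x. w x * (u x)\<^sup>2 \<partial>M) * (\<integral>x. w x * (Re (q x))\<^sup>2 \<partial>M)"
    unfolding S by (rule Cauchy_Schwarz_weighted_integral[OF _ _ _ w iu iRq]) auto
  also have "\<dots> \<le> (\<integral>x. w x * (u x)\<^sup>2 \<partial>M) * (\<integral>x. w x * (cmod (q x))\<^sup>2 \<partial>M)"
    using w by (intro mult_left_mono integral_mono iRq q_norm(1) Re_q integral_nonneg_AE) auto
  also have "(\<integral>x. w x * (cmod (q x))\<^sup>2 \<partial>M) \<le> (\<Sum>j\<in>F. \<Sum>l\<in>F. cmod (a j) * cmod (a l) * cmod (G j l))"
    unfolding q_norm(2)
    by (rule order_trans[OF complex_Re_le_cmod], rule order_trans[OF norm_sum],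
        intro sum_mono order.trans[OF norm_sum]) (simp add: norm_mult)
  finally show ?thesis
    using w by (simp add: mult_left_mono integral_nonneg_AE)
qed

lemma integrable_mult_bounded:
  fixes w :: "'a \<Rightarrow> real" and f :: "'a \<Rightarrow> complex"
  assumes w: "integrable M w" and f: "f \<in> borel_measurable M" "\<And>x. cmod (f x) \<le> B"
  shows "integrable M (\<lambda>x. complex_of_real (w x) * f x)"
proof (rule Bochner_Integration.integrable_bound)
  show "integrable M (\<lambda>x. B * w x)"
    using w by simp
  show "AE x in M. norm (complex_of_real (w x) * f x) \<le> norm (B * w x)"
  proof (rule AE_I2)
    fix x
    have "0 \<le> B"
      using f(2)[of x] norm_ge_zero order_trans by blast
    then show "norm (complex_of_real (w x) * f x) \<le> norm (B * w x)"
      using f(2)[of x] mult_left_mono[of "cmod (f x)" B "\<bar>w x\<bar>"]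
      by (simp add: norm_mult abs_mult mult.commute)
  qed
qed (use w f in simp)

lemma (in pair_sigma_finite) integral_mult_fst_snd:
  fixes f :: "'a \<Rightarrow> complex" and k :: "'b \<Rightarrow> complex"
  assumes f: "integrable M1 f" and k: "integrable M2 k"
  shows "integrable (M1 \<Otimes>\<^sub>M M2) (\<lambda>z. f (fst z) * k (snd z))"
    and "(\<integral>z. f (fst z) * k (snd z) \<partial>(M1 \<Otimes>\<^sub>M M2)) = integral\<^sup>L M1 f * integral\<^sup>L M2 k"
proof -
  have [measurable]: "f \<in> borel_measurable M1" "k \<in> borel_measurable M2"
    using f k by auto
  have "(\<integral>\<^sup>+z. norm (f (fst z) * k (snd z)) \<partial>(M1 \<Otimes>\<^sub>M M2))
      = (\<integral>\<^sup>+x. \<integral>\<^sup>+y. ennreal (norm (f x)) * ennreal (norm (k y)) \<partial>M2 \<partial>M1)"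
    by (subst M2.nn_integral_fst[symmetric]) (auto simp: norm_mult ennreal_mult)
  also have "\<dots> = (\<integral>\<^sup>+x. norm (f x) \<partial>M1) * (\<integral>\<^sup>+y. norm (k y) \<partial>M2)"
    by (simp add: nn_integral_cmult nn_integral_multc)
  also have "\<dots> < \<infinity>"
    using f k unfolding integrable_iff_bounded by (simp add: ennreal_mult_less_top)
  finally show int: "integrable (M1 \<Otimes>\<^sub>M M2) (\<lambda>z. f (fst z) * k (snd z))"
    unfolding integrable_iff_bounded by simp
  show "(\<integral>z. f (fst z) * k (snd z) \<partial>(M1 \<Otimes>\<^sub>M M2)) = integral\<^sup>L M1 f * integral\<^sup>L M2 k"
    using integral_fst'[OF int] by simp
qed

lemma (in pair_sigma_finite) integral_sum_mult_fst_snd: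
  fixes f :: "'i \<Rightarrow> 'a \<Rightarrow> complex" and k :: "'i \<Rightarrow> 'b \<Rightarrow> complex"
  assumes "\<And>i. i \<in> I \<Longrightarrow> integrable M1 (f i)" "\<And>i. i \<in> I \<Longrightarrow> integrable M2 (k i)"
  shows "integrable (M1 \<Otimes>\<^sub>M M2) (\<lambda>z. \<Sum>i\<in>I. f i (fst z) * k i (snd z))"
    and "(\<integral>z. (\<Sum>i\<in>I. f i (fst z) * k i (snd z)) \<partial>(M1 \<Otimes>\<^sub>M M2))
      = (\<Sum>i\<in>I. integral\<^sup>L M1 (f i) * integral\<^sup>L M2 (k i))"
  using integral_mult_fst_snd[OF assms]
  by (auto intro!: Bochner_Integration.integrable_sum simp: Bochner_Integration.integral_sum)

lemma sum_bilinear_le_Frobenius: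
  fixes x :: "'i \<Rightarrow> real" and M :: "'i \<Rightarrow> 'i \<Rightarrow> real"
  shows "(\<Sum>i\<in>I. \<Sum>j\<in>I. \<bar>x i\<bar> * \<bar>x j\<bar> * \<bar>M i j\<bar>)
    \<le> (\<Sum>i\<in>I. (x i)\<^sup>2) * sqrt (\<Sum>i\<in>I. \<Sum>j\<in>I. (M i j)\<^sup>2)"
proof -
  have "(\<Sum>i\<in>I. \<Sum>j\<in>I. \<bar>x i\<bar> * \<bar>x j\<bar> * \<bar>M i j\<bar>)
      = (\<Sum>p\<in>I \<times> I. \<bar>x (fst p) * x (snd p)\<bar> * \<bar>M (fst p) (snd p)\<bar>)"
    by (simp add: sum.cartesian_product case_prod_beta abs_mult)
  also have "\<dots> \<le> L2_set (\<lambda>p. x (fst p) * x (snd p)) (I \<times> I) * L2_set (\<lambda>p. M (fst p) (snd p)) (I \<times> I)"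
    by (rule L2_set_mult_ineq)
  also have "L2_set (\<lambda>p. x (fst p) * x (snd p)) (I \<times> I) = sqrt ((\<Sum>i\<in>I. (x i)\<^sup>2)\<^sup>2)"
    unfolding L2_set_def power2_eq_square[of "sum _ _"] sum_product
    by (simp add: sum.cartesian_product power_mult_distrib case_prod_beta)
  also have "\<dots> = (\<Sum>i\<in>I. (x i)\<^sup>2)"
    by (simp add: sum_nonneg)
  also have "L2_set (\<lambda>p. M (fst p) (snd p)) (I \<times> I) = sqrt (\<Sum>i\<in>I. \<Sum>j\<in>I. (M i j)\<^sup>2)"
    unfolding L2_set_def by (simp add: sum.cartesian_product case_prod_beta)
  finally show ?thesis .
qed

lemma sum_bilinear_le_row_sum:
  fixes x :: "'i \<Rightarrow> real" and M :: "'i \<Rightarrow> 'i \<Rightarrow> real"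
  assumes sym: "\<And>i j. M j i = M i j" and nonneg: "\<And>i j. 0 \<le> M i j"
    and row: "\<And>i. i \<in> I \<Longrightarrow> (\<Sum>j\<in>I. M i j) \<le> c"
  shows "(\<Sum>i\<in>I. \<Sum>j\<in>I. \<bar>x i\<bar> * \<bar>x j\<bar> * M i j) \<le> (\<Sum>i\<in>I. (x i)\<^sup>2) * c"
proof -
  have "(\<Sum>i\<in>I. \<Sum>j\<in>I. \<bar>x i\<bar> * \<bar>x j\<bar> * M i j)
      \<le> (\<Sum>i\<in>I. \<Sum>j\<in>I. (x i)\<^sup>2 / 2 * M i j + (x j)\<^sup>2 / 2 * M i j)"
  proof (intro sum_mono)
    fix i j
    have "\<bar>x i\<bar> * \<bar>x j\<bar> \<le> (x i)\<^sup>2 / 2 + (x j)\<^sup>2 / 2"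
      using sum_squares_bound[of "\<bar>x i\<bar>" "\<bar>x j\<bar>"] by simp
    from mult_right_mono[OF this nonneg]
    show "\<bar>x i\<bar> * \<bar>x j\<bar> * M i j \<le> (x i)\<^sup>2 / 2 * M i j + (x j)\<^sup>2 / 2 * M i j"
      by (simp add: distrib_right)
  qed
  also have "\<dots> = (\<Sum>i\<in>I. (x i)\<^sup>2 * (\<Sum>j\<in>I. M i j))"
  proof -
    have "(\<Sum>i\<in>I. \<Sum>j\<in>I. (x j)\<^sup>2 / 2 * M i j) = (\<Sum>i\<in>I. \<Sum>j\<in>I. (x i)\<^sup>2 / 2 * M i j)"
      by (subst sum.swap) (simp add: sym)
    then show ?thesis
      by (simp add: sum.distrib sum_distrib_left flip: sum_divide_distrib)
  qed
  also have "\<dots> \<le> (\<Sum>i\<in>I. (x i)\<^sup>2 * c)"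
    by (intro sum_mono mult_left_mono row) auto
  finally show ?thesis
    by (simp add: sum_distrib_right)
qed

lemma le_of_sq_le_mult:
  fixes s c :: real
  assumes "s\<^sup>2 \<le> s * c" "0 \<le> c"
  shows "s \<le> c"
  using assms by (cases "s \<le> 0") (auto simp: power2_eq_square mult_le_cancel_left)

lemma powr_three_quarters_sq:
  fixes r :: real
  assumes "0 \<le> r"
  shows "(r powr (3/4))\<^sup>2 = r * sqrt r"
proof (cases "r = 0")
  case False
  have "(r powr (3/4))\<^sup>2 = r powr (1 + 1/2)"
    by (simp add: power2_eq_square flip: powr_add)
  also have "\<dots> = r * sqrt r"
    using False assms by (subst powr_add) (simp_all add: powr_half_sqrt)
  finally show ?thesis .
qed simp

section \<open>Characters of the unit interval\<close>

definition echar :: "int \<Rightarrow> real \<Rightarrow> complex" where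
  "echar m y = exp (\<i> * complex_of_real (2 * pi * real_of_int m * y))"

lemma ej_uminus: "ej j (- y) = echar j y"
  unfolding ej_def echar_def by simp

lemma cnj_ej: "cnj (ej j y) = echar j y"
  unfolding ej_def echar_def by (simp add: exp_cnj)

lemma echar_mult: "echar m y * echar n y = echar (m + n) y"
  unfolding echar_def by (simp add: exp_add[symmetric] algebra_simps)

lemma cnj_echar: "cnj (echar m y) = echar (- m) y"
  unfolding echar_def by (simp add: exp_cnj)

lemma norm_echar [simp]: "cmod (echar m y) = 1"
  unfolding echar_def by (metis norm_exp_i_times)

lemma echar_0 [simp]: "echar 0 y = 1"
  unfolding echar_def by simp

lemma continuous_on_echar: "continuous_on S (echar m)"
  unfolding echar_def by (intro continuous_intros)

lemma borel_measurable_echar [measurable]: "echar m \<in> borel_measurable borel"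
  by (rule borel_measurable_continuous_onI[OF continuous_on_echar])

lemma set_integral_echar:
  assumes "m \<noteq> 0"
  shows "(LINT x:{0..<1}|lborel. echar m x) = 0"
proof -
  have "(LINT x:{0..<1}|lborel. echar m x) = (LINT x:{0..1}|lborel. echar m x)"
    by (rule set_integral_discrete_difference[where X="{1}"]) auto
  also have "\<dots> = integral {0..1} (echar m)"
    by (rule set_borel_integral_eq_integral(2)[OF borel_integrable_atLeastAtMost'[OF continuous_on_echar]])
  also have "\<dots> = integral {0..1} (\<lambda>t. exp ((\<i> * (2 * pi * of_int m)) * complex_of_real t))"
    unfolding echar_def by (simp add: mult_ac)
  also have "\<dots> = (exp ((\<i> * (2 * pi * of_int m)) * complex_of_real 1) - 1) / (\<i> * (2 * pi * of_int m))"
    by (rule integral_exp) (use assms in auto)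
  also have "exp ((\<i> * (2 * pi * of_int m)) * complex_of_real 1) = 1"
    using exp_integer_2pi[of "of_int m"] by (simp add: mult_ac)
  finally show ?thesis
    using assms by simp
qed

lemma echar_orthonormal:
  "(\<integral>x. complex_of_real (indicator {0..<1} x) * (echar j x * cnj (echar l x)) \<partial>lborel)
    = (if j = l then 1 else 0)"
proof (cases "j = l")
  case False
  then show ?thesis
    using set_integral_echar[of "j - l"]
    by (simp add: cnj_echar echar_mult set_lebesgue_integral_def scaleR_conv_of_real)
qed (simp add: cnj_echar echar_mult)

definition freqs :: "nat \<Rightarrow> int set" where
  "freqs k = {j. 1 \<le> \<bar>j\<bar> \<and> \<bar>j\<bar> \<le> int k}"

lemma freqs_eq: "freqs k = {- int k..-1} \<union> {1..int k}"
  unfolding freqs_def by auto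

lemma finite_freqs [simp]: "finite (freqs k)"
  unfolding freqs_eq by simp

lemma card_freqs: "card (freqs k) = 2 * k"
  unfolding freqs_eq by (subst card_Un_disjoint) auto

lemma uminus_freqs: "uminus ` freqs k = freqs k"
proof -
  have "j \<in> uminus ` freqs k" if "j \<in> freqs k" for j
    using that by (intro image_eqI[of _ _ "- j"]) (auto simp: freqs_def)
  then show ?thesis
    by (auto simp: freqs_def)
qed

section \<open>The kernel and its Gram matrix\<close>

locale unit_density =
  fixes g :: "real \<Rightarrow> real"
  assumes dens_D: "dens_D g"
begin

definition w :: "real \<Rightarrow> real" where
  "w x = g x * indicator {0..<1} x"

lemma borel_measurable_g [measurable]: "g \<in> borel_measurable borel"
  using dens_D unfolding dens_D_def by auto

lemma borel_measurable_w [measurable]: "w \<in> borel_measurable borel"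
  unfolding w_def by measurable

lemma w_nonneg: "0 \<le> w x"
  using dens_D unfolding dens_D_def w_def by (auto split: split_indicator)

lemma integrable_w: "integrable lborel w"
  using dens_D unfolding dens_D_def set_integrable_def w_def by (simp add: mult.commute)

lemma integral_w: "integral\<^sup>L lborel w = 1"
  using dens_D unfolding dens_D_def set_lebesgue_integral_def w_def by (simp add: mult.commute)

lemma integrable_w_mult:
  assumes "f \<in> borel_measurable borel" "\<And>x. cmod (f x) \<le> B"
  shows "integrable lborel (\<lambda>x. complex_of_real (w x) * f x)"
  using assms by (intro integrable_mult_bounded[OF integrable_w]) auto

lemma integrable_w_echar: "integrable lborel (\<lambda>x. complex_of_real (w x) * echar m x)"
  by (rule integrable_w_mult) auto

lemma integrable_complex_w: "integrable lborel (\<lambda>x. complex_of_real (w x))"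
  using integrable_w by simp

lemma fcoef_eq_integral: "fcoef g m = (\<integral>x. complex_of_real (w x) * echar m x \<partial>lborel)"
  unfolding fcoef_def set_lebesgue_integral_def w_def cnj_ej
  by (intro Bochner_Integration.integral_cong) (auto simp: scaleR_conv_of_real)

lemma norm_fcoef_le_1: "cmod (fcoef g m) \<le> 1"
proof -
  have "cmod (fcoef g m) \<le> (\<integral>x. cmod (complex_of_real (w x) * echar m x) \<partial>lborel)"
    unfolding fcoef_eq_integral by (rule integral_norm_bound)
  then show ?thesis
    using integral_w by (simp add: norm_mult w_nonneg)
qed

lemma fcoef_0: "fcoef g 0 = 1"
  unfolding fcoef_eq_integral using integral_w by simp

lemma fcoef_uminus: "fcoef g (- m) = cnj (fcoef g m)"
  unfolding fcoef_eq_integral Bochner_Integration.integral_cnj[symmetric]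
  by (simp add: cnj_echar)

definition cchar :: "int \<Rightarrow> real \<Rightarrow> complex" where
  "cchar j y = echar j y - fcoef g j"

lemma borel_measurable_cchar [measurable]: "cchar j \<in> borel_measurable borel"
  unfolding cchar_def by measurable

lemma norm_cchar_le_2: "cmod (cchar j y) \<le> 2"
  using norm_triangle_ineq4[of "echar j y" "fcoef g j"] norm_fcoef_le_1[of j]
  unfolding cchar_def by simp

lemma cchar_uminus: "cchar (- j) y = cnj (cchar j y)"
  unfolding cchar_def by (simp add: fcoef_uminus cnj_echar)

lemma integrable_w_cchar_mult:
  "integrable lborel (\<lambda>x. complex_of_real (w x) * (cchar j x * cnj (cchar l x)))"
proof (rule integrable_w_mult)
  show "cmod (cchar j x * cnj (cchar l x)) \<le> 2 * 2" for x
    unfolding norm_mult complex_mod_cnj by (intro mult_mono norm_cchar_le_2) auto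
qed (simp flip: cchar_uminus)

lemma integral_w_cchar: "(\<integral>x. complex_of_real (w x) * cchar j x \<partial>lborel) = 0"
proof -
  have "(\<lambda>x. complex_of_real (w x) * cchar j x)
      = (\<lambda>x. complex_of_real (w x) * echar j x - fcoef g j * complex_of_real (w x))"
    unfolding cchar_def by (auto simp: algebra_simps)
  then show ?thesis
    using integrable_complex_w integral_w
    by (simp add: integrable_w_echar fcoef_eq_integral[symmetric])
qed

lemma hker_eq: "hker g k y1 y2 = (\<Sum>j\<in>freqs k. cchar j y1 * cnj (cchar j y2))"
  unfolding hker_def freqs_def cchar_def ej_uminus
  by (simp add: cnj_ej[symmetric])

lemma cnj_hker: "cnj (hker g k y1 y2) = hker g k y1 y2"
proof -
  have "cnj (hker g k y1 y2) = (\<Sum>j\<in>freqs k. cchar (- j) y1 * cnj (cchar (- j) y2))"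
    unfolding hker_eq by (simp add: cchar_uminus)
  also have "\<dots> = (\<Sum>j\<in>uminus ` freqs k. cchar j y1 * cnj (cchar j y2))"
    by (subst sum.reindex) (auto simp: inj_on_def)
  finally show ?thesis
    unfolding uminus_freqs hker_eq .
qed

lemma Im_hker: "Im (hker g k y1 y2) = 0"
  using arg_cong[OF cnj_hker[of k y1 y2], of Im] by simp

lemma hker_commute: "hker g k y2 y1 = hker g k y1 y2"
proof -
  have "hker g k y2 y1 = cnj (hker g k y1 y2)"
    unfolding hker_eq by (simp add: mult.commute)
  then show ?thesis
    using cnj_hker by simp
qed

lemma norm_hker_le: "cmod (hker g k y1 y2) \<le> 8 * real k"
proof -
  have "cmod (hker g k y1 y2) \<le> (\<Sum>j\<in>freqs k. cmod (cchar j y1) * cmod (cchar j y2))"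
    unfolding hker_eq by (rule order_trans[OF norm_sum]) (simp add: norm_mult)
  also have "\<dots> \<le> (\<Sum>j\<in>freqs k. 2 * 2)"
    by (intro sum_mono mult_mono norm_cchar_le_2) auto
  finally show ?thesis
    by (simp add: card_freqs)
qed

lemma borel_measurable_hker [measurable]: "(\<lambda>x. hker g k x y) \<in> borel_measurable borel"
  unfolding hker_eq cchar_uminus[symmetric] by measurable

definition gram :: "int \<Rightarrow> int \<Rightarrow> complex" where
  "gram j l = (\<integral>x. complex_of_real (w x) * (cchar j x * cnj (cchar l x)) \<partial>lborel)"

lemma gram_eq: "gram j l = fcoef g (j - l) - fcoef g j * cnj (fcoef g l)"
proof -
  define a b where "a = fcoef g j" and "b = fcoef g l"
  have "complex_of_real (w x) * (cchar j x * cnj (cchar l x))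
      = complex_of_real (w x) * echar (j - l) x - cnj b * (complex_of_real (w x) * echar j x)
        - a * (complex_of_real (w x) * echar (- l) x) + (a * cnj b) * complex_of_real (w x)" for x
    using echar_mult[of j x "- l"] unfolding cchar_def a_def b_def
    by (simp add: cnj_echar algebra_simps)
  then have "gram j l = fcoef g (j - l) - cnj b * a - a * fcoef g (- l) + a * cnj b"
    unfolding gram_def fcoef_eq_integral using integrable_complex_w integral_w
    by (simp add: integrable_w_echar a_def[unfolded fcoef_eq_integral])
  then show ?thesis
    by (simp add: fcoef_uminus a_def b_def)
qed

lemma norm_gram_le: "cmod (gram j l) \<le> cmod (fcoef g (j - l)) + cmod (fcoef g j) * cmod (fcoef g l)"
  unfolding gram_eq by (metis norm_triangle_ineq4 norm_mult complex_mod_cnj)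

lemma norm_gram_commute: "cmod (gram l j) = cmod (gram j l)"
proof -
  have "gram l j = cnj (gram j l)"
    unfolding gram_def Bochner_Integration.integral_cnj[symmetric] by (simp add: mult_ac)
  then show ?thesis
    by simp
qed

lemma sum_norm_fcoef_sq_le_integral:
  assumes F: "finite F"
  shows "(\<Sum>m\<in>F. (cmod (fcoef g m))\<^sup>2) \<le> (LINT x:{0..<1}|lborel. (g x)\<^sup>2)"
proof -
  let ?S = "\<Sum>m\<in>F. (cmod (fcoef g m))\<^sup>2"
  let ?ind = "\<lambda>x::real. indicator {0..<1} x :: real"
  have ind_g: "?ind x * g x = w x" for x
    unfolding w_def by simp
  have "integrable lborel ?ind"
    by (rule integrable_real_indicator) auto
  then have iG: "integrable lborel (\<lambda>x. complex_of_real (?ind x) * (echar j x * cnj (echar l x)))" for j l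
    by (rule integrable_mult_bounded) (auto simp: norm_mult cnj_echar)
  have iu: "integrable lborel (\<lambda>x. ?ind x * (g x)\<^sup>2)"
    using dens_D unfolding dens_D_def set_integrable_def by simp
  have "?S\<^sup>2 \<le> (\<integral>x. ?ind x * (g x)\<^sup>2 \<partial>lborel) *
      (\<Sum>j\<in>F. \<Sum>l\<in>F. cmod (fcoef g j) * cmod (fcoef g l) * cmod (if j = l then 1 else 0 :: complex))"
    using Bessel_Gram_inequality[OF F _ _ _ _ iu _ iG]
    unfolding ind_g fcoef_eq_integral[symmetric] echar_orthonormal
    by (simp add: integrable_w_echar)
  also have "(\<Sum>j\<in>F. \<Sum>l\<in>F. cmod (fcoef g j) * cmod (fcoef g l) * cmod (if j = l then 1 else 0 :: complex)) = ?S"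
    using F by (simp add: if_distrib power2_eq_square sum.delta cong: if_cong)
  finally have "?S\<^sup>2 \<le> ?S * (LINT x:{0..<1}|lborel. (g x)\<^sup>2)"
    by (simp add: set_lebesgue_integral_def mult.commute)
  then show ?thesis
    by (rule le_of_sq_le_mult) (auto simp: set_lebesgue_integral_def intro!: integral_nonneg_AE)
qed

lemma summable_norm_fcoef_sq: "(\<lambda>m. (cmod (fcoef g m))\<^sup>2) summable_on UNIV"
  using sum_norm_fcoef_sq_le_integral
  by (intro nonneg_bdd_above_summable_on bdd_aboveI) auto

lemma sum_norm_fcoef_sq_le: "finite F \<Longrightarrow> (\<Sum>m\<in>F. (cmod (fcoef g m))\<^sup>2) \<le> (l2norm_fc g)\<^sup>2"
  unfolding l2norm_fc_def
  by (simp add: infsum_nonneg finite_sum_le_infsum[OF summable_norm_fcoef_sq])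

lemma l2norm_fc_ge_1: "1 \<le> l2norm_fc g"
proof (rule power2_le_imp_le)
  show "1\<^sup>2 \<le> (l2norm_fc g)\<^sup>2"
    using sum_norm_fcoef_sq_le[of "{0}"] by (simp add: fcoef_0)
qed (simp add: l2norm_fc_def infsum_nonneg)

lemma sum_norm_gram_sq_le: "(\<Sum>j\<in>freqs k. \<Sum>l\<in>freqs k. (cmod (gram j l))\<^sup>2) \<le> 4 * (l2norm_fc g)\<^sup>2 * (2 * k)"
proof -
  have row: "(\<Sum>l\<in>freqs k. (cmod (gram j l))\<^sup>2) \<le> 4 * (l2norm_fc g)\<^sup>2" for j
  proof -
    have "(cmod (gram j l))\<^sup>2 \<le> 2 * (cmod (fcoef g (j - l)))\<^sup>2 + 2 * (cmod (fcoef g l))\<^sup>2" for l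
    proof -
      have "cmod (fcoef g j) * cmod (fcoef g l) \<le> cmod (fcoef g l)"
        using norm_fcoef_le_1[of j] by (simp add: mult_left_le_one_le)
      then have "cmod (gram j l) \<le> cmod (fcoef g (j - l)) + cmod (fcoef g l)"
        using norm_gram_le[of j l] by linarith
      then show ?thesis
        by (smt (verit) norm_ge_zero power_mono sum_squares_bound power2_sum)
    qed
    then have "(\<Sum>l\<in>freqs k. (cmod (gram j l))\<^sup>2)
        \<le> 2 * (\<Sum>l\<in>freqs k. (cmod (fcoef g (j - l)))\<^sup>2) + 2 * (\<Sum>l\<in>freqs k. (cmod (fcoef g l))\<^sup>2)"
      by (simp add: sum_mono sum.distrib[symmetric] sum_distrib_left)
    also have "(\<Sum>l\<in>freqs k. (cmod (fcoef g (j - l)))\<^sup>2) = (\<Sum>m\<in>(\<lambda>l. j - l) ` freqs k. (cmod (fcoef g m))\<^sup>2)"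
      by (subst sum.reindex) (auto simp: inj_on_def)
    finally show ?thesis
      using sum_norm_fcoef_sq_le[of "(\<lambda>l. j - l) ` freqs k"] sum_norm_fcoef_sq_le[of "freqs k"] by simp
  qed
  have "(\<Sum>j\<in>freqs k. \<Sum>l\<in>freqs k. (cmod (gram j l))\<^sup>2) \<le> card (freqs k) * (4 * (l2norm_fc g)\<^sup>2)"
    by (rule sum_bounded_above) (rule row)
  then show ?thesis
    by (simp add: card_freqs mult_ac)
qed

definition gram_frobenius :: "nat \<Rightarrow> real" where
  "gram_frobenius k = sqrt (\<Sum>j\<in>freqs k. \<Sum>l\<in>freqs k. (cmod (gram j l))\<^sup>2)"

lemma gram_frobenius_le: "gram_frobenius k \<le> 2 * l2norm_fc g * (2 * real k) powr (1/2)"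
proof -
  have "gram_frobenius k \<le> sqrt (4 * (l2norm_fc g)\<^sup>2 * (2 * k))"
    unfolding gram_frobenius_def using sum_norm_gram_sq_le by (rule real_sqrt_le_mono)
  also have "\<dots> = \<bar>2 * l2norm_fc g\<bar> * sqrt (2 * real k)"
    unfolding real_sqrt_abs[symmetric] real_sqrt_mult[symmetric] by (simp add: power_mult_distrib)
  also have "\<dots> = 2 * l2norm_fc g * (2 * real k) powr (1/2)"
    using l2norm_fc_ge_1 by (simp add: powr_half_sqrt)
  finally show ?thesis .
qed

lemma l1norm_fc_nonneg: "0 \<le> l1norm_fc g"
  unfolding l1norm_fc_def by (rule infsum_nonneg) auto

lemma sum_norm_gram_row_le:
  assumes sm: "(\<lambda>j. cmod (fcoef g j)) summable_on UNIV"
  shows "(\<Sum>l\<in>freqs k. cmod (gram j l)) \<le> 2 * l1norm_fc g"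
proof -
  have le: "finite F \<Longrightarrow> (\<Sum>m\<in>F. cmod (fcoef g m)) \<le> l1norm_fc g" for F
    unfolding l1norm_fc_def by (rule finite_sum_le_infsum[OF sm]) auto
  have "(\<Sum>l\<in>freqs k. cmod (gram j l))
      \<le> (\<Sum>l\<in>freqs k. cmod (fcoef g (j - l))) + cmod (fcoef g j) * (\<Sum>l\<in>freqs k. cmod (fcoef g l))"
    using sum_mono[OF norm_gram_le] by (simp add: sum.distrib sum_distrib_left)
  also have "(\<Sum>l\<in>freqs k. cmod (fcoef g (j - l))) = (\<Sum>m\<in>(\<lambda>l. j - l) ` freqs k. cmod (fcoef g m))"
    by (subst sum.reindex) (auto simp: inj_on_def)
  also have "\<dots> \<le> l1norm_fc g"
    by (rule le) simp
  also have "cmod (fcoef g j) * (\<Sum>l\<in>freqs k. cmod (fcoef g l)) \<le> 1 * l1norm_fc g"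
    by (intro mult_mono norm_fcoef_le_1 le) (auto intro: sum_nonneg)
  finally show ?thesis
    by simp
qed

section \<open>Coefficients of test functions\<close>

lemma integrable_w_unit_ball:
  assumes [measurable]: "\<zeta> \<in> borel_measurable borel"
    and \<zeta>: "(\<integral>\<^sup>+ x. ennreal ((\<zeta> x)\<^sup>2 * g x) * indicator {0..<1} x \<partial>lborel) \<le> 1"
  shows "integrable lborel (\<lambda>x. w x * (\<zeta> x)\<^sup>2)"
    and "(\<integral>x. w x * (\<zeta> x)\<^sup>2 \<partial>lborel) \<le> 1"
    and "integrable lborel (\<lambda>x. w x * \<zeta> x)"
proof -
  have eq: "(\<integral>\<^sup>+ x. ennreal ((\<zeta> x)\<^sup>2 * g x) * indicator {0..<1} x \<partial>lborel)
      = (\<integral>\<^sup>+ x. ennreal (w x * (\<zeta> x)\<^sup>2) \<partial>lborel)"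
    by (intro nn_integral_cong) (auto simp: w_def mult.commute split: split_indicator)
  show int: "integrable lborel (\<lambda>x. w x * (\<zeta> x)\<^sup>2)"
    using \<zeta> w_nonneg unfolding eq integrable_iff_bounded by (simp add: order.strict_trans1)
  then have "ennreal (\<integral>x. w x * (\<zeta> x)\<^sup>2 \<partial>lborel) \<le> 1"
    using \<zeta> w_nonneg unfolding eq by (simp add: nn_integral_eq_integral)
  then show "(\<integral>x. w x * (\<zeta> x)\<^sup>2 \<partial>lborel) \<le> 1"
    by (simp add: ennreal_le_1)
  show "integrable lborel (\<lambda>x. w x * \<zeta> x)"
  proof (rule Bochner_Integration.integrable_bound)
    show "integrable lborel (\<lambda>x. w x * (\<zeta> x)\<^sup>2 + w x)"
      using int integrable_w by simp
    have "\<bar>z\<bar> \<le> z\<^sup>2 + 1" for z :: real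
    proof (cases "\<bar>z\<bar> \<le> 1")
      case False
      then have "\<bar>z\<bar> * 1 \<le> \<bar>z\<bar> * \<bar>z\<bar>"
        by (intro mult_left_mono) auto
      then show ?thesis
        by (simp add: power2_eq_square abs_mult_self_eq)
    qed (use zero_le_power2[of z] in linarith)
    then have "w x * \<bar>\<zeta> x\<bar> \<le> w x * ((\<zeta> x)\<^sup>2 + 1)" for x
      by (rule mult_left_mono) (rule w_nonneg)
    then show "AE x in lborel. norm (w x * \<zeta> x) \<le> norm (w x * (\<zeta> x)\<^sup>2 + w x)"
      using w_nonneg by (auto simp: abs_mult distrib_left intro!: AE_I2)
  qed simp
qed

definition coef :: "(real \<Rightarrow> real) \<Rightarrow> int \<Rightarrow> complex" where
  "coef \<zeta> j = (\<integral>x. complex_of_real (w x * \<zeta> x) * cchar j x \<partial>lborel)"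

definition coef_sq_sum :: "nat \<Rightarrow> (real \<Rightarrow> real) \<Rightarrow> real" where
  "coef_sq_sum k \<zeta> = (\<Sum>j\<in>freqs k. (cmod (coef \<zeta> j))\<^sup>2)"

lemma coef_sq_sum_nonneg: "0 \<le> coef_sq_sum k \<zeta>"
  unfolding coef_sq_sum_def by (intro sum_nonneg) auto

lemma integrable_w_mult_cchar:
  assumes [measurable]: "\<zeta> \<in> borel_measurable borel"
    and "(\<integral>\<^sup>+ x. ennreal ((\<zeta> x)\<^sup>2 * g x) * indicator {0..<1} x \<partial>lborel) \<le> 1"
  shows "integrable lborel (\<lambda>x. complex_of_real (w x * \<zeta> x) * cchar j x)"
  using integrable_w_unit_ball(3)[OF assms] by (rule integrable_mult_bounded) (auto intro: norm_cchar_le_2)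

lemma coef_sq_sum_sq_le:
  assumes [measurable]: "\<zeta> \<in> borel_measurable borel"
    and \<zeta>: "(\<integral>\<^sup>+ x. ennreal ((\<zeta> x)\<^sup>2 * g x) * indicator {0..<1} x \<partial>lborel) \<le> 1"
  shows "(coef_sq_sum k \<zeta>)\<^sup>2
    \<le> (\<Sum>j\<in>freqs k. \<Sum>l\<in>freqs k. cmod (coef \<zeta> j) * cmod (coef \<zeta> l) * cmod (gram j l))"
proof -
  let ?R = "\<Sum>j\<in>freqs k. \<Sum>l\<in>freqs k. cmod (coef \<zeta> j) * cmod (coef \<zeta> l) * cmod (gram j l)"
  have "(coef_sq_sum k \<zeta>)\<^sup>2 \<le> (\<integral>x. w x * (\<zeta> x)\<^sup>2 \<partial>lborel) * ?R"
    unfolding coef_sq_sum_def coef_def gram_def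
    by (rule Bessel_Gram_inequality)
      (auto simp: w_nonneg integrable_w_unit_ball[OF _ \<zeta>] integrable_w_mult_cchar[OF _ \<zeta>, simplified]
        integrable_w_cchar_mult)
  also have "\<dots> \<le> 1 * ?R"
    by (intro mult_right_mono integrable_w_unit_ball[OF _ \<zeta>] sum_nonneg) auto
  finally show ?thesis
    by simp
qed

lemma coef_sq_sum_le_gram_frobenius:
  assumes "\<zeta> \<in> borel_measurable borel"
    and "(\<integral>\<^sup>+ x. ennreal ((\<zeta> x)\<^sup>2 * g x) * indicator {0..<1} x \<partial>lborel) \<le> 1"
  shows "coef_sq_sum k \<zeta> \<le> gram_frobenius k"
proof (rule le_of_sq_le_mult)
  show "(coef_sq_sum k \<zeta>)\<^sup>2 \<le> coef_sq_sum k \<zeta> * gram_frobenius k"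
    using order_trans[OF coef_sq_sum_sq_le[OF assms]
        sum_bilinear_le_Frobenius[where x="\<lambda>j. cmod (coef \<zeta> j)" and M="\<lambda>j l. cmod (gram j l)", simplified]]
    unfolding coef_sq_sum_def gram_frobenius_def .
qed (simp add: gram_frobenius_def sum_nonneg)

lemma coef_sq_sum_le_l1norm:
  assumes "\<zeta> \<in> borel_measurable borel"
    and "(\<integral>\<^sup>+ x. ennreal ((\<zeta> x)\<^sup>2 * g x) * indicator {0..<1} x \<partial>lborel) \<le> 1"
    and "(\<lambda>j. cmod (fcoef g j)) summable_on UNIV"
  shows "coef_sq_sum k \<zeta> \<le> 2 * l1norm_fc g"
proof (rule le_of_sq_le_mult)
  show "(coef_sq_sum k \<zeta>)\<^sup>2 \<le> coef_sq_sum k \<zeta> * (2 * l1norm_fc g)"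
  proof (rule order_trans[OF coef_sq_sum_sq_le[OF assms(1,2)]])
    show "(\<Sum>j\<in>freqs k. \<Sum>l\<in>freqs k. cmod (coef \<zeta> j) * cmod (coef \<zeta> l) * cmod (gram j l))
        \<le> coef_sq_sum k \<zeta> * (2 * l1norm_fc g)"
      unfolding coef_sq_sum_def
      by (rule sum_bilinear_le_row_sum[where x="\<lambda>j. cmod (coef \<zeta> j)", simplified])
        (auto simp: norm_gram_commute sum_norm_gram_row_le[OF assms(3)])
  qed
qed (simp add: l1norm_fc_nonneg)

section \<open>Moments of the kernel\<close>

lemma hker_mean_zero:
  shows "set_integrable lborel {0..<1} (\<lambda>y1. hker g k y1 y2 * complex_of_real (g y1))"
    and "(LINT y1:{0..<1}|lborel. hker g k y1 y2 * complex_of_real (g y1)) = 0"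
proof -
  have eq: "(\<lambda>x. indicator {0..<1} x *\<^sub>R (hker g k x y2 * complex_of_real (g x)))
      = (\<lambda>x. complex_of_real (w x) * hker g k x y2)"
    by (auto simp: w_def scaleR_conv_of_real mult_ac split: split_indicator)
  show "set_integrable lborel {0..<1} (\<lambda>y1. hker g k y1 y2 * complex_of_real (g y1))"
    unfolding set_integrable_def eq by (rule integrable_w_mult[OF _ norm_hker_le]) simp
  have "(\<lambda>x. complex_of_real (w x) * hker g k x y2)
      = (\<lambda>x. \<Sum>j\<in>freqs k. cnj (cchar j y2) * (complex_of_real (w x) * cchar j x))"
    unfolding hker_eq by (auto simp: sum_distrib_left mult_ac)
  then show "(LINT y1:{0..<1}|lborel. hker g k y1 y2 * complex_of_real (g y1)) = 0"
    unfolding set_lebesgue_integral_def eq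
    by (simp add: integral_w_cchar integrable_w_mult[OF _ norm_cchar_le_2])
qed

lemma hker_mult_cnj:
  "hker g k a b * cnj (hker g k a b)
    = (\<Sum>j\<in>freqs k. \<Sum>l\<in>freqs k. (cchar j a * cnj (cchar l a)) * (cnj (cchar j b) * cchar l b))"
proof -
  have "hker g k a b * cnj (hker g k a b)
      = (\<Sum>j\<in>freqs k. cchar j a * cnj (cchar j b)) * (\<Sum>l\<in>freqs k. cnj (cchar l a) * cchar l b)"
    unfolding hker_eq by simp
  then show ?thesis
    unfolding sum_product by (simp add: mult_ac)
qed

lemma Re_hker_mult_cnj:
  "Re (complex_of_real c * (hker g k a b * cnj (hker g k a b))) = c * (Re (hker g k a b))\<^sup>2"
  using Im_hker[of k a b] by (simp add: power2_eq_square)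

lemma set_integral_hker_sq_le:
  "(LINT y1:{0..<1}|lborel. (Re (hker g k y1 y2))\<^sup>2 * g y1) \<le> 4 * (2 * real k) * gram_frobenius k"
proof -
  define c where "c j l = cnj (cchar j y2) * cchar l y2" for j l
  have expand: "(\<lambda>x. complex_of_real (w x) * (hker g k x y2 * cnj (hker g k x y2)))
     = (\<lambda>x. \<Sum>j\<in>freqs k. \<Sum>l\<in>freqs k. c j l * (complex_of_real (w x) * (cchar j x * cnj (cchar l x))))"
    unfolding hker_mult_cnj c_def by (auto simp: sum_distrib_left mult_ac)
  have int: "integrable lborel (\<lambda>x. complex_of_real (w x) * (hker g k x y2 * cnj (hker g k x y2)))"
    unfolding expand by (simp add: integrable_w_cchar_mult)
  have val: "(\<integral>x. complex_of_real (w x) * (hker g k x y2 * cnj (hker g k x y2)) \<partial>lborel)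
      = (\<Sum>j\<in>freqs k. \<Sum>l\<in>freqs k. c j l * gram j l)"
    unfolding expand by (simp add: gram_def integrable_w_cchar_mult)
  have eq: "(\<lambda>x. indicator {0..<1} x *\<^sub>R ((Re (hker g k x y2))\<^sup>2 * g x))
      = (\<lambda>x. Re (complex_of_real (w x) * (hker g k x y2 * cnj (hker g k x y2))))"
    unfolding Re_hker_mult_cnj by (auto simp: w_def mult_ac split: split_indicator)
  have "(LINT y1:{0..<1}|lborel. (Re (hker g k y1 y2))\<^sup>2 * g y1)
      = Re (\<Sum>j\<in>freqs k. \<Sum>l\<in>freqs k. c j l * gram j l)"
    unfolding set_lebesgue_integral_def eq integral_Re[OF int] val ..
  also have "\<dots> \<le> (\<Sum>j\<in>freqs k. \<Sum>l\<in>freqs k. \<bar>1\<bar> * \<bar>1\<bar> * \<bar>4 * cmod (gram j l)\<bar>)"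
  proof (rule order_trans[OF complex_Re_le_cmod], rule order_trans[OF norm_sum],
      intro sum_mono order_trans[OF norm_sum])
    fix j l
    have "cmod (c j l) \<le> 2 * 2"
      unfolding c_def norm_mult complex_mod_cnj by (intro mult_mono norm_cchar_le_2) auto
    then show "cmod (c j l * gram j l) \<le> \<bar>1\<bar> * \<bar>1\<bar> * \<bar>4 * cmod (gram j l)\<bar>"
      unfolding norm_mult by (simp add: mult_right_mono)
  qed
  also have "\<dots> \<le> (\<Sum>j\<in>freqs k. 1\<^sup>2) * sqrt (\<Sum>j\<in>freqs k. \<Sum>l\<in>freqs k. (4 * cmod (gram j l))\<^sup>2)"
    by (rule sum_bilinear_le_Frobenius)
  also have "\<dots> = 4 * (2 * real k) * gram_frobenius k"
    by (simp add: card_freqs gram_frobenius_def power_mult_distrib real_sqrt_mult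
        sum_distrib_left[symmetric])
  finally show ?thesis .
qed

lemma set_integral_pair_separable:
  fixes F K :: "'i \<Rightarrow> real \<Rightarrow> complex" and f :: "real \<Rightarrow> real \<Rightarrow> real"
  assumes sep: "\<And>a b. w a * w b * f a b = Re (\<Sum>i\<in>I. F i a * cnj (K i b))"
    and iF: "\<And>i. i \<in> I \<Longrightarrow> integrable lborel (F i)"
    and iK: "\<And>i. i \<in> I \<Longrightarrow> integrable lborel (K i)"
  shows "(LINT z:{0..<1}\<times>{0..<1}|(lborel \<Otimes>\<^sub>M lborel). f (fst z) (snd z) * g (fst z) * g (snd z))
    = Re (\<Sum>i\<in>I. integral\<^sup>L lborel (F i) * cnj (integral\<^sup>L lborel (K i)))"
proof -
  have eq: "(\<lambda>z. indicator ({0..<1}\<times>{0..<1}) z *\<^sub>R (f (fst z) (snd z) * g (fst z) * g (snd z)))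
      = (\<lambda>z. Re (\<Sum>i\<in>I. F i (fst z) * cnj (K i (snd z))))"
    unfolding sep[symmetric] by (auto simp: w_def split: split_indicator)
  note prod = lborel_pair.integral_sum_mult_fst_snd[where I=I, OF iF integrable_cnj[OF iK]]
  have "(LINT z:{0..<1}\<times>{0..<1}|(lborel \<Otimes>\<^sub>M lborel). f (fst z) (snd z) * g (fst z) * g (snd z))
      = (\<integral>z. Re (\<Sum>i\<in>I. F i (fst z) * cnj (K i (snd z))) \<partial>(lborel \<Otimes>\<^sub>M lborel))"
    unfolding set_lebesgue_integral_def eq ..
  also have "\<dots> = Re (\<Sum>i\<in>I. integral\<^sup>L lborel (F i) * integral\<^sup>L lborel (\<lambda>y. cnj (K i y)))"
    using integral_Re[OF prod(1)] prod(2) by simp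
  finally show ?thesis
    by (simp only: Bochner_Integration.integral_cnj)
qed

lemma set_integral_pair_hker_sq:
  "(LINT z:{0..<1}\<times>{0..<1}|(lborel \<Otimes>\<^sub>M lborel).
      (Re (hker g k (fst z) (snd z)))\<^sup>2 * g (fst z) * g (snd z)) = (gram_frobenius k)\<^sup>2"
proof -
  define F where "F p = (\<lambda>x. complex_of_real (w x) * (cchar (fst p) x * cnj (cchar (snd p) x)))" for p
  have sep: "w a * w b * (Re (hker g k a b))\<^sup>2 = Re (\<Sum>p\<in>freqs k \<times> freqs k. F p a * cnj (F p b))" for a b
  proof -
    have "(\<Sum>p\<in>freqs k \<times> freqs k. F p a * cnj (F p b))
        = complex_of_real (w a * w b) * (hker g k a b * cnj (hker g k a b))"
      unfolding hker_mult_cnj F_def sum.cartesian_product sum_distrib_left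
      by (intro sum.cong refl) (auto simp: mult_ac)
    then show ?thesis
      by (simp only: Re_hker_mult_cnj)
  qed
  have iF: "integrable lborel (F p)" for p
    unfolding F_def by (rule integrable_w_cchar_mult)
  have "(LINT z:{0..<1}\<times>{0..<1}|(lborel \<Otimes>\<^sub>M lborel).
      (Re (hker g k (fst z) (snd z)))\<^sup>2 * g (fst z) * g (snd z))
     = Re (\<Sum>p\<in>freqs k \<times> freqs k. gram (fst p) (snd p) * cnj (gram (fst p) (snd p)))"
    unfolding set_integral_pair_separable[OF sep iF iF] F_def gram_def ..
  also have "\<dots> = (\<Sum>p\<in>freqs k \<times> freqs k. (cmod (gram (fst p) (snd p)))\<^sup>2)"
    by (simp add: Re_sum complex_mult_cnj cmod_power2)
  also have "\<dots> = (gram_frobenius k)\<^sup>2"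
    by (simp add: gram_frobenius_def sum.cartesian_product case_prod_beta sum_nonneg)
  finally show ?thesis .
qed

lemma set_integral_pair_hker_bilinear_le:
  assumes [measurable]: "\<zeta> \<in> borel_measurable borel" "\<xi> \<in> borel_measurable borel"
    and \<zeta>: "(\<integral>\<^sup>+ x. ennreal ((\<zeta> x)\<^sup>2 * g x) * indicator {0..<1} x \<partial>lborel) \<le> 1"
    and \<xi>: "(\<integral>\<^sup>+ x. ennreal ((\<xi> x)\<^sup>2 * g x) * indicator {0..<1} x \<partial>lborel) \<le> 1"
  shows "(LINT z:{0..<1}\<times>{0..<1}|(lborel \<Otimes>\<^sub>M lborel).
        Re (hker g k (fst z) (snd z)) * \<zeta> (fst z) * \<xi> (snd z) * g (fst z) * g (snd z))
      \<le> sqrt (coef_sq_sum k \<zeta>) * sqrt (coef_sq_sum k \<xi>)"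
proof -
  define F where "F \<eta> j = (\<lambda>x. complex_of_real (w x * \<eta> x) * cchar j x)" for \<eta> j
  have sep: "w a * w b * (Re (hker g k a b) * \<zeta> a * \<xi> b) = Re (\<Sum>j\<in>freqs k. F \<zeta> j a * cnj (F \<xi> j b))"
    for a b
  proof -
    have "(\<Sum>j\<in>freqs k. F \<zeta> j a * cnj (F \<xi> j b)) = complex_of_real (w a * \<zeta> a * (w b * \<xi> b)) * hker g k a b"
      unfolding hker_eq F_def sum_distrib_left by (intro sum.cong refl) (auto simp: mult_ac)
    then show ?thesis
      by (simp add: mult_ac)
  qed
  have iF: "integrable lborel (F \<zeta> j)" "integrable lborel (F \<xi> j)" for j
    unfolding F_def by (rule integrable_w_mult_cchar[OF assms(1) \<zeta>], rule integrable_w_mult_cchar[OF assms(2) \<xi>])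
  have "(LINT z:{0..<1}\<times>{0..<1}|(lborel \<Otimes>\<^sub>M lborel).
        Re (hker g k (fst z) (snd z)) * \<zeta> (fst z) * \<xi> (snd z) * g (fst z) * g (snd z))
      = Re (\<Sum>j\<in>freqs k. coef \<zeta> j * cnj (coef \<xi> j))"
    unfolding set_integral_pair_separable[OF sep iF] F_def coef_def ..
  also have "\<dots> \<le> (\<Sum>j\<in>freqs k. \<bar>cmod (coef \<zeta> j)\<bar> * \<bar>cmod (coef \<xi> j)\<bar>)"
    by (rule order_trans[OF complex_Re_le_cmod], rule order_trans[OF norm_sum]) (simp add: norm_mult)
  also have "\<dots> \<le> L2_set (\<lambda>j. cmod (coef \<zeta> j)) (freqs k) * L2_set (\<lambda>j. cmod (coef \<xi> j)) (freqs k)"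
    by (rule L2_set_mult_ineq)
  finally show ?thesis
    unfolding L2_set_def coef_sq_sum_def .
qed

lemma set_integral_hker_sq_le_l2norm:
  "(LINT y1:{0..<1}|lborel. (Re (hker g k y1 y2))\<^sup>2 * g y1)
    \<le> (3 * l2norm_fc g * (2 * real k) powr (3/4))\<^sup>2"
proof -
  define r where "r = 2 * real k"
  have r: "0 \<le> r" "0 \<le> sqrt r"
    unfolding r_def by simp_all
  have "gram_frobenius k \<le> 2 * l2norm_fc g * sqrt r"
    using gram_frobenius_le[of k] r unfolding r_def by (simp add: powr_half_sqrt)
  then have "(LINT y1:{0..<1}|lborel. (Re (hker g k y1 y2))\<^sup>2 * g y1) \<le> 4 * r * (2 * l2norm_fc g * sqrt r)"
    using set_integral_hker_sq_le[of k y2] r unfolding r_def[symmetric]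
    by (meson order_trans mult_left_mono mult_nonneg_nonneg zero_le_numeral)
  also have "\<dots> = 8 * l2norm_fc g * (r * sqrt r)"
    by simp
  also have "\<dots> \<le> 9 * (l2norm_fc g)\<^sup>2 * (r * sqrt r)"
    using l2norm_fc_ge_1 r by (intro mult_right_mono) (auto simp: power2_eq_square)
  also have "\<dots> = (3 * l2norm_fc g * (2 * real k) powr (3/4))\<^sup>2"
    using r by (simp add: power_mult_distrib powr_three_quarters_sq r_def)
  finally show ?thesis .
qed

lemma set_integral_pair_hker_sq_le_l2norm:
  "(LINT z:{0..<1}\<times>{0..<1}|(lborel \<Otimes>\<^sub>M lborel).
      (Re (hker g k (fst z) (snd z)))\<^sup>2 * g (fst z) * g (snd z))
    \<le> (2 * l2norm_fc g * (2 * real k) powr (1/2))\<^sup>2"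
  unfolding set_integral_pair_hker_sq
  by (intro power_mono gram_frobenius_le) (simp add: gram_frobenius_def sum_nonneg)

lemma set_integral_pair_hker_bilinear_le_bound:
  assumes "\<zeta> \<in> borel_measurable borel" "\<xi> \<in> borel_measurable borel"
    and "(\<integral>\<^sup>+ x. ennreal ((\<zeta> x)\<^sup>2 * g x) * indicator {0..<1} x \<partial>lborel) \<le> 1"
    and "(\<integral>\<^sup>+ x. ennreal ((\<xi> x)\<^sup>2 * g x) * indicator {0..<1} x \<partial>lborel) \<le> 1"
    and bound: "\<And>\<eta>. \<eta> \<in> borel_measurable borel \<Longrightarrow>
      (\<integral>\<^sup>+ x. ennreal ((\<eta> x)\<^sup>2 * g x) * indicator {0..<1} x \<partial>lborel) \<le> 1 \<Longrightarrow>
      coef_sq_sum k \<eta> \<le> c"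
  shows "(LINT z:{0..<1}\<times>{0..<1}|(lborel \<Otimes>\<^sub>M lborel).
        Re (hker g k (fst z) (snd z)) * \<zeta> (fst z) * \<xi> (snd z) * g (fst z) * g (snd z)) \<le> c"
proof -
  have c: "0 \<le> c"
    using coef_sq_sum_nonneg bound[OF assms(1,3)] by (rule order_trans)
  have "sqrt (coef_sq_sum k \<zeta>) * sqrt (coef_sq_sum k \<xi>) \<le> sqrt c * sqrt c"
    using assms c by (intro mult_mono real_sqrt_le_mono) (auto intro: coef_sq_sum_nonneg)
  then have "sqrt (coef_sq_sum k \<zeta>) * sqrt (coef_sq_sum k \<xi>) \<le> c"
    using c by simp
  then show ?thesis
    by (rule order_trans[OF set_integral_pair_hker_bilinear_le[OF assms(1-4)]])
qed

lemma set_integral_pair_hker_bilinear_le_l2norm: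
  assumes "\<zeta> \<in> borel_measurable borel" "\<xi> \<in> borel_measurable borel"
    and "(\<integral>\<^sup>+ x. ennreal ((\<zeta> x)\<^sup>2 * g x) * indicator {0..<1} x \<partial>lborel) \<le> 1"
    and "(\<integral>\<^sup>+ x. ennreal ((\<xi> x)\<^sup>2 * g x) * indicator {0..<1} x \<partial>lborel) \<le> 1"
  shows "(LINT z:{0..<1}\<times>{0..<1}|(lborel \<Otimes>\<^sub>M lborel).
        Re (hker g k (fst z) (snd z)) * \<zeta> (fst z) * \<xi> (snd z) * g (fst z) * g (snd z))
      \<le> 2 * l2norm_fc g * (2 * real k) powr (1/2)"
  using assms coef_sq_sum_le_gram_frobenius gram_frobenius_le
  by (blast intro: set_integral_pair_hker_bilinear_le_bound order_trans)

lemma set_integral_pair_hker_bilinear_le_l1norm: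
  assumes "\<zeta> \<in> borel_measurable borel" "\<xi> \<in> borel_measurable borel"
    and "(\<integral>\<^sup>+ x. ennreal ((\<zeta> x)\<^sup>2 * g x) * indicator {0..<1} x \<partial>lborel) \<le> 1"
    and "(\<integral>\<^sup>+ x. ennreal ((\<xi> x)\<^sup>2 * g x) * indicator {0..<1} x \<partial>lborel) \<le> 1"
    and "(\<lambda>j. cmod (fcoef g j)) summable_on UNIV"
  shows "(LINT z:{0..<1}\<times>{0..<1}|(lborel \<Otimes>\<^sub>M lborel).
        Re (hker g k (fst z) (snd z)) * \<zeta> (fst z) * \<xi> (snd z) * g (fst z) * g (snd z))
      \<le> 2 * l1norm_fc g"
  using assms coef_sq_sum_le_l1norm by (blast intro: set_integral_pair_hker_bilinear_le_bound)

end

theorem corollaryA5: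
  fixes g :: "real \<Rightarrow> real" and k :: nat
  assumes g: "dens_D g"
  defines "h \<equiv> hker g k"
  defines "A \<equiv> 8 * real k"
    and "B \<equiv> 3 * l2norm_fc g * (2 * real k) powr (3/4)"
    and "C \<equiv> 2 * l2norm_fc g * (2 * real k) powr (1/2)"
  shows "(\<forall>y1\<in>{0..<1}. \<forall>y2\<in>{0..<1}. Im (h y1 y2) = 0)
    \<and> (\<exists>M. \<forall>y1\<in>{0..<1}. \<forall>y2\<in>{0..<1}. cmod (h y1 y2) \<le> M)
    \<and> (\<forall>y1\<in>{0..<1}. \<forall>y2\<in>{0..<1}. h y1 y2 = h y2 y1)
    \<and> (\<forall>y2\<in>{0..<1}. set_integrable lborel {0..<1} (\<lambda>y1. h y1 y2 * complex_of_real (g y1))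
          \<and> (LINT y1:{0..<1}|lborel. h y1 y2 * complex_of_real (g y1)) = 0)
    \<and> (\<forall>y1\<in>{0..<1}. \<forall>y2\<in>{0..<1}. cmod (h y1 y2) \<le> A)
    \<and> (\<forall>y2\<in>{0..<1}. (LINT y1:{0..<1}|lborel. (Re (h y1 y2))\<^sup>2 * g y1) \<le> B\<^sup>2)
    \<and> (LINT z:{0..<1}\<times>{0..<1}|(lborel \<Otimes>\<^sub>M lborel).
          (Re (h (fst z) (snd z)))\<^sup>2 * g (fst z) * g (snd z)) \<le> C\<^sup>2
    \<and> (\<forall>\<zeta> \<xi>. \<zeta> \<in> borel_measurable borel \<longrightarrow> \<xi> \<in> borel_measurable borel
         \<longrightarrow> (\<integral>\<^sup>+ x. ennreal ((\<zeta> x)\<^sup>2 * g x) * indicator {0..<1} x \<partial>lborel) \<le> 1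
         \<longrightarrow> (\<integral>\<^sup>+ x. ennreal ((\<xi> x)\<^sup>2 * g x) * indicator {0..<1} x \<partial>lborel) \<le> 1
         \<longrightarrow> (LINT z:{0..<1}\<times>{0..<1}|(lborel \<Otimes>\<^sub>M lborel).
               Re (h (fst z) (snd z)) * \<zeta> (fst z) * \<xi> (snd z) * g (fst z) * g (snd z)) \<le> C)
    \<and> (L2w g = L2w (\<lambda>_. 1) \<longrightarrow> (\<lambda>j. cmod (fcoef g j)) summable_on (UNIV::int set) \<longrightarrow>
        (\<forall>\<zeta> \<xi>. \<zeta> \<in> borel_measurable borel \<longrightarrow> \<xi> \<in> borel_measurable borel
         \<longrightarrow> (\<integral>\<^sup>+ x. ennreal ((\<zeta> x)\<^sup>2 * g x) * indicator {0..<1} x \<partial>lborel) \<le> 1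
         \<longrightarrow> (\<integral>\<^sup>+ x. ennreal ((\<xi> x)\<^sup>2 * g x) * indicator {0..<1} x \<partial>lborel) \<le> 1
         \<longrightarrow> (LINT z:{0..<1}\<times>{0..<1}|(lborel \<Otimes>\<^sub>M lborel).
               Re (h (fst z) (snd z)) * \<zeta> (fst z) * \<xi> (snd z) * g (fst z) * g (snd z))
             \<le> 4 * l1norm_fc g))"
proof -
  interpret unit_density g
    by (rule unit_density.intro[OF g])
  have l1: "2 * l1norm_fc g \<le> 4 * l1norm_fc g"
    using l1norm_fc_nonneg by simp
  show ?thesis
    unfolding h_def A_def B_def C_def
    by (intro conjI ballI allI impI exI[of _ "8 * real k"])
      (auto simp: Im_hker norm_hker_le hker_mean_zero set_integral_hker_sq_le_l2norm
        set_integral_pair_hker_sq_le_l2norm set_integral_pair_hker_bilinear_le_l2norm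
        order_trans[OF set_integral_pair_hker_bilinear_le_l1norm l1] intro: hker_commute)
qed

end
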